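(* Each of the following theories (in a language with two binary relation symbols $R$ and $S$, where $S$ is required to be coarser than $R$, i.e. $R\subseteq S$) has superSAP with respect to both relations (simultaneously): (1) $R$ and $S$ are both partial orders; (2) $R$ is a partial order and $S$ is a preorder (reflexive transitive); (3) $R$ is a partial order and $S$ is a tolerance (reflexive symmetric); (4) $R$ is a strict partial order (antireflexive transitive) and $S$ is a graph relation (symmetric antireflexive); (5) $R$ is a directed graph relation (antireflexive) and $S$ is a strict order relation (antireflexive transitive). Moreover, SAP is maintained if families of unary operations which preserve both relations ($x\,R\,y\Rightarrow h(x)\,R\,h(y)$ and $x\,S\,y\Rightarrow h(x)\,S\,h(y)$) or reverse both relations ($x\,R\,y\Rightarrow h(y)\,R\,h(x)$ and $x\,S\,y\Rightarrow h(y)\,S\,h(x)$) are added.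
   Context: A triple to be amalgamated is $\mathbf{A},\mathbf{B},\mathbf{C}$ models with $\mathbf{C}\subseteq\mathbf{A}$, $\mathbf{C}\subseteq\mathbf{B}$, $C=A\cap B$. SAP: there is a model $\mathbf{D}$ with $\mathbf{A},\mathbf{B}\subseteq\mathbf{D}$. SuperSAP with respect to a relation $T$: a $\mathbf{D}$ witnessing SAP such that for $a\in A\setminus B$, $b\in B\setminus A$, $a\,T_{\mathbf{D}}\,b$ implies $a\,T_{\mathbf{A}}\,c\,T_{\mathbf{B}}\,b$ for some $c\in C$, and $b\,T_{\mathbf{D}}\,a$ implies $b\,T_{\mathbf{B}}\,c\,T_{\mathbf{A}}\,a$ for some $c\in C$. *)

theory Defs
  imports Main
begin

text \<open>A structure for the language with two binary relation symbols R and S: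
  a carrier set together with interpretations of R and S (only their values on
  the carrier matter).\<close>
record 'a rstr =
  carrier :: "'a set"
  rel_R :: "'a \<Rightarrow> 'a \<Rightarrow> bool"
  rel_S :: "'a \<Rightarrow> 'a \<Rightarrow> bool"

record ('a, 'i) ostr = "'a rstr" +
  ops :: "'i \<Rightarrow> 'a \<Rightarrow> 'a"

datatype thy = T1 | T2 | T3 | T4 | T5

definition partial_order_on :: "'a set \<Rightarrow> ('a \<Rightarrow> 'a \<Rightarrow> bool) \<Rightarrow> bool" where
  "partial_order_on A r \<longleftrightarrow> reflp_on A r \<and> antisymp_on A r \<and> transp_on A r"

definition preorder_on :: "'a set \<Rightarrow> ('a \<Rightarrow> 'a \<Rightarrow> bool) \<Rightarrow> bool" where
  "preorder_on A r \<longleftrightarrow> reflp_on A r \<and> transp_on A r"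

definition tolerance_on :: "'a set \<Rightarrow> ('a \<Rightarrow> 'a \<Rightarrow> bool) \<Rightarrow> bool" where
  "tolerance_on A r \<longleftrightarrow> reflp_on A r \<and> symp_on A r"

definition strict_partial_order_on :: "'a set \<Rightarrow> ('a \<Rightarrow> 'a \<Rightarrow> bool) \<Rightarrow> bool" where
  "strict_partial_order_on A r \<longleftrightarrow> irreflp_on A r \<and> transp_on A r"

definition graph_rel_on :: "'a set \<Rightarrow> ('a \<Rightarrow> 'a \<Rightarrow> bool) \<Rightarrow> bool" where
  "graph_rel_on A r \<longleftrightarrow> symp_on A r \<and> irreflp_on A r"

definition digraph_rel_on :: "'a set \<Rightarrow> ('a \<Rightarrow> 'a \<Rightarrow> bool) \<Rightarrow> bool" where
  "digraph_rel_on A r \<longleftrightarrow> irreflp_on A r"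

definition rmodel :: "thy \<Rightarrow> ('a, 'b) rstr_scheme \<Rightarrow> bool" where
  "rmodel t M \<longleftrightarrow>
     (\<forall>x\<in>carrier M. \<forall>y\<in>carrier M. rel_R M x y \<longrightarrow> rel_S M x y) \<and>
     (case t of
        T1 \<Rightarrow> partial_order_on (carrier M) (rel_R M) \<and> partial_order_on (carrier M) (rel_S M)
      | T2 \<Rightarrow> partial_order_on (carrier M) (rel_R M) \<and> preorder_on (carrier M) (rel_S M)
      | T3 \<Rightarrow> partial_order_on (carrier M) (rel_R M) \<and> tolerance_on (carrier M) (rel_S M)
      | T4 \<Rightarrow> strict_partial_order_on (carrier M) (rel_R M) \<and> graph_rel_on (carrier M) (rel_S M)
      | T5 \<Rightarrow> digraph_rel_on (carrier M) (rel_R M) \<and> strict_partial_order_on (carrier M) (rel_S M))"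

definition rsubstr :: "('a, 'b) rstr_scheme \<Rightarrow> ('a, 'c) rstr_scheme \<Rightarrow> bool" where
  "rsubstr C A \<longleftrightarrow> carrier C \<subseteq> carrier A \<and>
     (\<forall>x\<in>carrier C. \<forall>y\<in>carrier C.
        (rel_R C x y \<longleftrightarrow> rel_R A x y) \<and> (rel_S C x y \<longleftrightarrow> rel_S A x y))"

text \<open>Models of the expanded theory: pol i = True means the operation ops i
  preserves both relations, pol i = False means it reverses both relations.\<close>
definition omodel :: "thy \<Rightarrow> ('i \<Rightarrow> bool) \<Rightarrow> ('a, 'i) ostr \<Rightarrow> bool" where
  "omodel t pol M \<longleftrightarrow> rmodel t M \<and>
     (\<forall>i. \<forall>x\<in>carrier M. ops M i x \<in> carrier M) \<and>
     (\<forall>i. \<forall>x\<in>carrier M. \<forall>y\<in>carrier M.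
        (if pol i then
           (rel_R M x y \<longrightarrow> rel_R M (ops M i x) (ops M i y)) \<and>
           (rel_S M x y \<longrightarrow> rel_S M (ops M i x) (ops M i y))
         else
           (rel_R M x y \<longrightarrow> rel_R M (ops M i y) (ops M i x)) \<and>
           (rel_S M x y \<longrightarrow> rel_S M (ops M i y) (ops M i x))))"

definition osubstr :: "('a, 'i) ostr \<Rightarrow> ('a, 'i) ostr \<Rightarrow> bool" where
  "osubstr C A \<longleftrightarrow> rsubstr C A \<and>
     (\<forall>i. \<forall>x\<in>carrier C. ops C i x = ops A i x)"

definition super_cond ::
  "(('a, 'b) rstr_scheme \<Rightarrow> 'a \<Rightarrow> 'a \<Rightarrow> bool) \<Rightarrow>
   ('a, 'b) rstr_scheme \<Rightarrow> ('a, 'b) rstr_scheme \<Rightarrow> ('a, 'b) rstr_scheme \<Rightarrow>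
   ('a, 'b) rstr_scheme \<Rightarrow> bool" where
  "super_cond T A B C D \<longleftrightarrow>
     (\<forall>a\<in>carrier A - carrier B. \<forall>b\<in>carrier B - carrier A.
        (T D a b \<longrightarrow> (\<exists>c\<in>carrier C. T A a c \<and> T B c b)) \<and>
        (T D b a \<longrightarrow> (\<exists>c\<in>carrier C. T B b c \<and> T A c a)))"

end

theory Submission
  imports Defs
begin

text \<open>The amalgam lives on \<open>A \<union> B\<close>. A transitive relation is amalgamated by relating
  \<open>a \<in> A - B\<close> and \<open>b \<in> B - A\<close> exactly when they are linked by a two-step chain through
  \<open>C = A \<inter> B\<close>; since the relations agree on \<open>C\<close>, this is transitive, restricts to the
  given relations on \<open>A\<close> and \<open>B\<close>, and satisfies the superSAP condition by construction.
  A non-transitive relation gets no cross pairs at all (\<open>R\<close> in theory 5), or, for the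
  symmetric \<open>S\<close> of theories 3 and 4, exactly the symmetrised cross pairs of the amalgamated
  \<open>R\<close>, which keeps \<open>R \<subseteq> S\<close>. Since every cross pair is forced by
  transitivity or symmetry from pairs inside \<open>A\<close> or \<open>B\<close>, a map preserving the relations on
  \<open>A\<close> and on \<open>B\<close> preserves them on the amalgam; applied to the glued unary operations,
  with the amalgam or its converse as target, this gives the second part.\<close>

section \<open>Amalgamation of binary relations\<close>

definition agree_on :: "'a set \<Rightarrow> 'a set \<Rightarrow> ('a \<Rightarrow> 'a \<Rightarrow> bool) \<Rightarrow> ('a \<Rightarrow> 'a \<Rightarrow> bool) \<Rightarrow> bool" where
  "agree_on a b rA rB \<longleftrightarrow> (\<forall>x\<in>a \<inter> b. \<forall>y\<in>a \<inter> b. rA x y \<longleftrightarrow> rB x y)"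

definition free_amalg ::
  "'a set \<Rightarrow> 'a set \<Rightarrow> ('a \<Rightarrow> 'a \<Rightarrow> bool) \<Rightarrow> ('a \<Rightarrow> 'a \<Rightarrow> bool) \<Rightarrow> 'a \<Rightarrow> 'a \<Rightarrow> bool" where
  "free_amalg a b rA rB x y \<longleftrightarrow> x \<in> a \<and> y \<in> a \<and> rA x y \<or> x \<in> b \<and> y \<in> b \<and> rB x y"

text \<open>For transitive relations agreeing on \<open>a \<inter> b\<close> this is the transitive closure of
  \<open>free_amalg\<close>: a chain has to cross between the two sides only once.\<close>

definition trans_amalg ::
  "'a set \<Rightarrow> 'a set \<Rightarrow> ('a \<Rightarrow> 'a \<Rightarrow> bool) \<Rightarrow> ('a \<Rightarrow> 'a \<Rightarrow> bool) \<Rightarrow> 'a \<Rightarrow> 'a \<Rightarrow> bool" where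
  "trans_amalg a b rA rB x y \<longleftrightarrow>
     free_amalg a b rA rB x y \<or> (\<exists>c\<in>a \<inter> b. free_amalg a b rA rB x c \<and> free_amalg a b rA rB c y)"

text \<open>The cross pairs come from \<open>R\<close>-chains, not \<open>S\<close>-chains: operations need not preserve an
  \<open>S\<close>-chain through the common part, since \<open>S\<close> is not transitive, but they do preserve
  \<open>R\<close>-chains.\<close>

definition sym_amalg ::
  "'a set \<Rightarrow> 'a set \<Rightarrow> ('a \<Rightarrow> 'a \<Rightarrow> bool) \<Rightarrow> ('a \<Rightarrow> 'a \<Rightarrow> bool) \<Rightarrow>
   ('a \<Rightarrow> 'a \<Rightarrow> bool) \<Rightarrow> ('a \<Rightarrow> 'a \<Rightarrow> bool) \<Rightarrow> 'a \<Rightarrow> 'a \<Rightarrow> bool" where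
  "sym_amalg a b rA rB sA sB x y \<longleftrightarrow>
     free_amalg a b sA sB x y \<or> trans_amalg a b rA rB x y \<or> trans_amalg a b rA rB y x"

lemma free_amalg_restrict:
  assumes "agree_on a b rA rB"
  shows "x \<in> a \<Longrightarrow> y \<in> a \<Longrightarrow> free_amalg a b rA rB x y \<longleftrightarrow> rA x y"
    and "x \<in> b \<Longrightarrow> y \<in> b \<Longrightarrow> free_amalg a b rA rB x y \<longleftrightarrow> rB x y"
  using assms unfolding free_amalg_def agree_on_def by auto

lemma free_amalg_outside:
  shows "x \<notin> b \<Longrightarrow> free_amalg a b rA rB x y \<longleftrightarrow> x \<in> a \<and> y \<in> a \<and> rA x y"
    and "y \<notin> b \<Longrightarrow> free_amalg a b rA rB x y \<longleftrightarrow> x \<in> a \<and> y \<in> a \<and> rA x y"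
    and "x \<notin> a \<Longrightarrow> free_amalg a b rA rB x y \<longleftrightarrow> x \<in> b \<and> y \<in> b \<and> rB x y"
    and "y \<notin> a \<Longrightarrow> free_amalg a b rA rB x y \<longleftrightarrow> x \<in> b \<and> y \<in> b \<and> rB x y"
  unfolding free_amalg_def by auto

lemma free_amalg_trans:
  assumes "agree_on a b rA rB" "transp_on a rA" "transp_on b rB"
    and "free_amalg a b rA rB u v" "free_amalg a b rA rB v w"
    and "u \<in> a \<and> w \<in> a \<or> u \<in> b \<and> w \<in> b \<or> v \<notin> a \<inter> b"
  shows "free_amalg a b rA rB u w"
  using assms unfolding free_amalg_def agree_on_def by (blast dest: transp_onD)

lemma trans_amalg_same_side:
  assumes "agree_on a b rA rB" "transp_on a rA" "transp_on b rB"
    and "x \<in> a \<and> y \<in> a \<or> x \<in> b \<and> y \<in> b"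
  shows "trans_amalg a b rA rB x y \<longleftrightarrow> free_amalg a b rA rB x y"
  using free_amalg_trans[OF assms(1-3)] assms(4) unfolding trans_amalg_def by blast

lemma trans_amalg_restrict:
  assumes "agree_on a b rA rB" "transp_on a rA" "transp_on b rB"
  shows "x \<in> a \<Longrightarrow> y \<in> a \<Longrightarrow> trans_amalg a b rA rB x y \<longleftrightarrow> rA x y"
    and "x \<in> b \<Longrightarrow> y \<in> b \<Longrightarrow> trans_amalg a b rA rB x y \<longleftrightarrow> rB x y"
  using trans_amalg_same_side[OF assms] free_amalg_restrict[OF assms(1)] by auto

lemma trans_amalg_cross:
  assumes "x \<in> a - b" "y \<in> b - a"
  shows "trans_amalg a b rA rB x y \<longleftrightarrow> (\<exists>c\<in>a \<inter> b. rA x c \<and> rB c y)"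
    and "trans_amalg a b rA rB y x \<longleftrightarrow> (\<exists>c\<in>a \<inter> b. rB y c \<and> rA c x)"
  using assms unfolding trans_amalg_def by (auto simp: free_amalg_outside)

lemma trans_amalg_free_step:
  assumes "agree_on a b rA rB" "transp_on a rA" "transp_on b rB"
    and xy: "trans_amalg a b rA rB x y" and yz: "free_amalg a b rA rB y z"
  shows "trans_amalg a b rA rB x z"
proof -
  from xy consider "free_amalg a b rA rB x y"
    | c where "c \<in> a \<inter> b" "free_amalg a b rA rB x c" "free_amalg a b rA rB c y"
    unfolding trans_amalg_def by blast
  then show ?thesis
  proof cases
    case 1
    then show ?thesis
      using free_amalg_trans[OF assms(1-3) _ yz] yz unfolding trans_amalg_def by blast
  next
    case (2 c)
    have "z \<in> a \<union> b" using yz unfolding free_amalg_def by blast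
    with 2 have "free_amalg a b rA rB c z"
      using free_amalg_trans[OF assms(1-3) _ yz] by blast
    with 2 show ?thesis unfolding trans_amalg_def by blast
  qed
qed

lemma transp_trans_amalg:
  assumes "agree_on a b rA rB" "transp_on a rA" "transp_on b rB"
  shows "transp (trans_amalg a b rA rB)"
proof (rule transpI)
  fix x y z assume xy: "trans_amalg a b rA rB x y" and yz: "trans_amalg a b rA rB y z"
  note step = trans_amalg_free_step[OF assms]
  from yz consider "free_amalg a b rA rB y z"
    | c where "free_amalg a b rA rB y c" "free_amalg a b rA rB c z"
    unfolding trans_amalg_def by blast
  then show "trans_amalg a b rA rB x z"
    by cases (use xy step in blast)+
qed

lemma trans_amalg_no_cross_cycle:
  assumes agree: "agree_on a b rA rB" and trans: "transp_on a rA" "transp_on b rB"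
    and antisym: "antisymp_on a rA"
    and x: "x \<in> a - b" and y: "y \<in> b - a"
    and xy: "trans_amalg a b rA rB x y" and yx: "trans_amalg a b rA rB y x"
  shows False
proof -
  obtain c where c: "c \<in> a \<inter> b" "rA x c" "rB c y"
    using trans_amalg_cross(1)[OF x y] xy by blast
  obtain d where d: "d \<in> a \<inter> b" "rB y d" "rA d x"
    using trans_amalg_cross(2)[OF x y] yx by blast
  have "rB c d" using transp_onD[OF trans(2), of c y d] c d y by blast
  then have "rA c d" using c d agree unfolding agree_on_def by blast
  moreover have "rA d c" using transp_onD[OF trans(1), of d x c] c d x by blast
  ultimately have "c = d" using antisymp_onD[OF antisym, of c d] c d by blast
  then have "x = c" using antisymp_onD[OF antisym, of x c] c d x by blast
  with c x show False by blast
qed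

lemma antisymp_on_trans_amalg:
  assumes agree: "agree_on a b rA rB" and trans: "transp_on a rA" "transp_on b rB"
    and antisym: "antisymp_on a rA" "antisymp_on b rB"
  shows "antisymp_on (a \<union> b) (trans_amalg a b rA rB)"
proof (rule antisymp_onI)
  fix x y assume "x \<in> a \<union> b" "y \<in> a \<union> b"
    and xy: "trans_amalg a b rA rB x y" and yx: "trans_amalg a b rA rB y x"
  then consider "x \<in> a" "y \<in> a" | "x \<in> b" "y \<in> b" | "x \<in> a - b" "y \<in> b - a" | "x \<in> b - a" "y \<in> a - b"
    by blast
  then show "x = y"
  proof cases
    case 1
    then show ?thesis
      using xy yx antisymp_onD[OF antisym(1), of x y] by (simp add: trans_amalg_restrict[OF agree trans])
  next
    case 2
    then show ?thesis
      using xy yx antisymp_onD[OF antisym(2), of x y] by (simp add: trans_amalg_restrict[OF agree trans])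
  next
    case 3
    then show ?thesis using trans_amalg_no_cross_cycle[OF agree trans antisym(1)] xy yx by blast
  next
    case 4
    then show ?thesis using trans_amalg_no_cross_cycle[OF agree trans antisym(1)] xy yx by blast
  qed
qed

lemma trans_amalgI_free: "free_amalg a b rA rB x y \<Longrightarrow> trans_amalg a b rA rB x y"
  unfolding trans_amalg_def by blast

lemma free_amalg_mono:
  assumes "\<forall>x\<in>a. \<forall>y\<in>a. rA x y \<longrightarrow> sA x y" "\<forall>x\<in>b. \<forall>y\<in>b. rB x y \<longrightarrow> sB x y"
  shows "free_amalg a b rA rB x y \<Longrightarrow> free_amalg a b sA sB x y"
  using assms unfolding free_amalg_def by blast

lemma trans_amalg_mono:
  assumes "\<forall>x\<in>a. \<forall>y\<in>a. rA x y \<longrightarrow> sA x y" "\<forall>x\<in>b. \<forall>y\<in>b. rB x y \<longrightarrow> sB x y"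
  shows "trans_amalg a b rA rB x y \<Longrightarrow> trans_amalg a b sA sB x y"
  using free_amalg_mono[OF assms] unfolding trans_amalg_def by blast

lemma monotone_on_free_amalg:
  "monotone_on a rA Q h \<Longrightarrow> monotone_on b rB Q h \<Longrightarrow> monotone_on (a \<union> b) (free_amalg a b rA rB) Q h"
  unfolding monotone_on_def free_amalg_def by blast

lemma monotone_on_trans_amalg:
  assumes "transp_on d Q" "h ` (a \<union> b) \<subseteq> d" "monotone_on a rA Q h" "monotone_on b rB Q h"
  shows "monotone_on (a \<union> b) (trans_amalg a b rA rB) Q h"
proof (rule monotone_onI)
  fix x y assume "x \<in> a \<union> b" "y \<in> a \<union> b" "trans_amalg a b rA rB x y"
  moreover note free = monotone_on_free_amalg[OF assms(3,4), THEN monotone_onD]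
  ultimately show "Q (h x) (h y)"
    using assms(1,2) unfolding trans_amalg_def by (blast dest: transp_onD)
qed

lemma sym_amalg_restrict:
  assumes "agree_on a b rA rB" "transp_on a rA" "transp_on b rB" "agree_on a b sA sB"
    and "symp_on a sA" "symp_on b sB"
    and "\<forall>x\<in>a. \<forall>y\<in>a. rA x y \<longrightarrow> sA x y" "\<forall>x\<in>b. \<forall>y\<in>b. rB x y \<longrightarrow> sB x y"
  shows "x \<in> a \<Longrightarrow> y \<in> a \<Longrightarrow> sym_amalg a b rA rB sA sB x y \<longleftrightarrow> sA x y"
    and "x \<in> b \<Longrightarrow> y \<in> b \<Longrightarrow> sym_amalg a b rA rB sA sB x y \<longleftrightarrow> sB x y"
  using assms(7,8) symp_onD[OF assms(5), of y x] symp_onD[OF assms(6), of y x]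
  unfolding sym_amalg_def
  by (simp_all add: trans_amalg_restrict[OF assms(1-3)] free_amalg_restrict[OF assms(4)]) blast+

lemma symp_sym_amalg:
  assumes "symp_on a sA" "symp_on b sB"
  shows "symp (sym_amalg a b rA rB sA sB)"
proof (rule sympI)
  fix x y assume xy: "sym_amalg a b rA rB sA sB x y"
  have "free_amalg a b sA sB x y \<Longrightarrow> free_amalg a b sA sB y x"
    using symp_onD[OF assms(1), of x y] symp_onD[OF assms(2), of x y]
    unfolding free_amalg_def by blast
  with xy show "sym_amalg a b rA rB sA sB y x"
    unfolding sym_amalg_def by blast
qed

lemma sym_amalgI_trans:
  "trans_amalg a b rA rB x y \<Longrightarrow> sym_amalg a b rA rB sA sB x y"
  unfolding sym_amalg_def by blast

lemma sym_amalg_cross: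
  assumes "symp_on a sA" "symp_on b sB"
    and "\<forall>x\<in>a. \<forall>y\<in>a. rA x y \<longrightarrow> sA x y" "\<forall>x\<in>b. \<forall>y\<in>b. rB x y \<longrightarrow> sB x y"
    and x: "x \<in> a - b" and y: "y \<in> b - a"
    and xy: "sym_amalg a b rA rB sA sB x y \<or> sym_amalg a b rA rB sA sB y x"
  shows "\<exists>c\<in>a \<inter> b. sA x c \<and> sA c x \<and> sB c y \<and> sB y c"
proof -
  obtain c where c: "c \<in> a \<inter> b" and "rA x c \<or> rA c x" and "rB c y \<or> rB y c"
    using xy x y unfolding sym_amalg_def
    by (auto simp: free_amalg_outside trans_amalg_cross[OF x y])
  then have "sA x c" "sB c y"
    using assms(1-4) x y symp_onD[OF assms(1), of c x] symp_onD[OF assms(2), of y c] by blast+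
  then show ?thesis
    using c x y symp_onD[OF assms(1), of x c] symp_onD[OF assms(2), of c y] by blast
qed

lemma monotone_on_sym_amalg:
  assumes "symp_on d Q" "h ` (a \<union> b) \<subseteq> d" "monotone_on a sA Q h" "monotone_on b sB Q h"
    and trans: "monotone_on (a \<union> b) (trans_amalg a b rA rB) Q h"
  shows "monotone_on (a \<union> b) (sym_amalg a b rA rB sA sB) Q h"
proof (rule monotone_onI)
  fix x y assume x: "x \<in> a \<union> b" and y: "y \<in> a \<union> b" and "sym_amalg a b rA rB sA sB x y"
  then consider "free_amalg a b sA sB x y" | "trans_amalg a b rA rB x y" | "trans_amalg a b rA rB y x"
    unfolding sym_amalg_def by blast
  then show "Q (h x) (h y)"
  proof cases
    case 1
    then show ?thesis using monotone_on_free_amalg[OF assms(3,4)] x y by (blast dest: monotone_onD)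
  next
    case 2
    then show ?thesis using trans x y by (blast dest: monotone_onD)
  next
    case 3
    then have "Q (h y) (h x)" using trans x y by (blast dest: monotone_onD)
    then show ?thesis using symp_onD[OF assms(1)] assms(2) x y by blast
  qed
qed

section \<open>The amalgam of two models\<close>

lemma agree_on_rsubstr:
  assumes "rsubstr C A" "rsubstr C B" "carrier C = carrier A \<inter> carrier B"
  shows "agree_on (carrier A) (carrier B) (rel_R A) (rel_R B)"
    and "agree_on (carrier A) (carrier B) (rel_S A) (rel_S B)"
  using assms unfolding agree_on_def rsubstr_def by auto

lemma rmodel_R_le_S: "rmodel t M \<Longrightarrow> \<forall>x\<in>carrier M. \<forall>y\<in>carrier M. rel_R M x y \<longrightarrow> rel_S M x y"
  unfolding rmodel_def by blast

lemma rmodel_transp_R: "rmodel t M \<Longrightarrow> t \<noteq> T5 \<Longrightarrow> transp_on (carrier M) (rel_R M)"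
  by (cases t) (simp_all add: rmodel_def partial_order_on_def strict_partial_order_on_def)

lemma rmodel_transp_S: "rmodel t M \<Longrightarrow> t \<noteq> T3 \<Longrightarrow> t \<noteq> T4 \<Longrightarrow> transp_on (carrier M) (rel_S M)"
  by (cases t) (simp_all add: rmodel_def partial_order_on_def preorder_on_def strict_partial_order_on_def)

lemma rmodel_symp_S: "rmodel t M \<Longrightarrow> t = T3 \<or> t = T4 \<Longrightarrow> symp_on (carrier M) (rel_S M)"
  by (auto simp: rmodel_def tolerance_on_def graph_rel_on_def)

definition amalgam :: "thy \<Rightarrow> ('a, 'b) rstr_scheme \<Rightarrow> ('a, 'c) rstr_scheme \<Rightarrow> 'd \<Rightarrow> ('a, 'd) rstr_scheme" where
  "amalgam t A B m =
     \<lparr>carrier = carrier A \<union> carrier B,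
      rel_R = (if t = T5 then free_amalg (carrier A) (carrier B) (rel_R A) (rel_R B)
               else trans_amalg (carrier A) (carrier B) (rel_R A) (rel_R B)),
      rel_S = (if t = T3 \<or> t = T4
               then sym_amalg (carrier A) (carrier B) (rel_R A) (rel_R B) (rel_S A) (rel_S B)
               else trans_amalg (carrier A) (carrier B) (rel_S A) (rel_S B)),
      \<dots> = m\<rparr>"

lemma carrier_amalgam [simp]: "carrier (amalgam t A B m) = carrier A \<union> carrier B"
  by (simp add: amalgam_def)

lemma rsubstr_amalgam:
  assumes A: "rmodel t A" and B: "rmodel t B"
    and agree_R: "agree_on (carrier A) (carrier B) (rel_R A) (rel_R B)"
    and agree_S: "agree_on (carrier A) (carrier B) (rel_S A) (rel_S B)"
  shows "rsubstr A (amalgam t A B m)" and "rsubstr B (amalgam t A B m)"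
proof -
  note trans_R = trans_amalg_restrict[OF agree_R rmodel_transp_R[OF A] rmodel_transp_R[OF B]]
  note trans_S = trans_amalg_restrict[OF agree_S rmodel_transp_S[OF A] rmodel_transp_S[OF B]]
  note sym_S = sym_amalg_restrict[OF agree_R rmodel_transp_R[OF A] rmodel_transp_R[OF B] agree_S
      rmodel_symp_S[OF A] rmodel_symp_S[OF B] rmodel_R_le_S[OF A] rmodel_R_le_S[OF B]]
  show "rsubstr A (amalgam t A B m)" "rsubstr B (amalgam t A B m)"
    unfolding rsubstr_def amalgam_def
    by (auto simp: free_amalg_restrict[OF agree_R] trans_R trans_S sym_S)
qed

lemma reflp_irreflp_on_rsubstr_cover:
  assumes "rsubstr A D" "rsubstr B D" "carrier D = carrier A \<union> carrier B"
  shows "reflp_on (carrier D) (rel_R D) \<longleftrightarrow> reflp_on (carrier A) (rel_R A) \<and> reflp_on (carrier B) (rel_R B)"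
    and "reflp_on (carrier D) (rel_S D) \<longleftrightarrow> reflp_on (carrier A) (rel_S A) \<and> reflp_on (carrier B) (rel_S B)"
    and "irreflp_on (carrier D) (rel_R D) \<longleftrightarrow> irreflp_on (carrier A) (rel_R A) \<and> irreflp_on (carrier B) (rel_R B)"
    and "irreflp_on (carrier D) (rel_S D) \<longleftrightarrow> irreflp_on (carrier A) (rel_S A) \<and> irreflp_on (carrier B) (rel_S B)"
  using assms unfolding rsubstr_def reflp_on_def irreflp_on_def by auto

lemma rmodel_amalgam:
  assumes A: "rmodel t A" and B: "rmodel t B"
    and agree_R: "agree_on (carrier A) (carrier B) (rel_R A) (rel_R B)"
    and agree_S: "agree_on (carrier A) (carrier B) (rel_S A) (rel_S B)"
  shows "rmodel t (amalgam t A B m)"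
proof -
  define D where "D = amalgam t A B m"
  note transp_R = rmodel_transp_R[OF A] rmodel_transp_R[OF B]
  note transp_S = rmodel_transp_S[OF A] rmodel_transp_S[OF B]
  note R_le_S = rmodel_R_le_S[OF A] rmodel_R_le_S[OF B]
  note diag = reflp_irreflp_on_rsubstr_cover[OF rsubstr_amalgam[OF A B agree_R agree_S, where m = m]
      carrier_amalgam[of t A B m], folded D_def]
  have R_le_S_D: "\<forall>x\<in>carrier D. \<forall>y\<in>carrier D. rel_R D x y \<longrightarrow> rel_S D x y"
    unfolding D_def amalgam_def
    by (auto intro: trans_amalgI_free sym_amalgI_trans free_amalg_mono[OF R_le_S]
        trans_amalg_mono[OF R_le_S])
  have transp_R_D: "t \<noteq> T5 \<Longrightarrow> transp_on (carrier D) (rel_R D)"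
    using transp_trans_amalg[OF agree_R transp_R] unfolding D_def amalgam_def
    by (auto intro: transp_on_subset)
  have transp_S_D: "t \<noteq> T3 \<Longrightarrow> t \<noteq> T4 \<Longrightarrow> transp_on (carrier D) (rel_S D)"
    using transp_trans_amalg[OF agree_S transp_S] unfolding D_def amalgam_def
    by (auto intro: transp_on_subset)
  have symp_S_D: "t = T3 \<or> t = T4 \<Longrightarrow> symp_on (carrier D) (rel_S D)"
    using symp_sym_amalg[OF rmodel_symp_S[OF A] rmodel_symp_S[OF B]] unfolding D_def amalgam_def
    by (auto intro: symp_on_subset)
  have antisymp_R_D: "t \<noteq> T4 \<Longrightarrow> t \<noteq> T5 \<Longrightarrow> antisymp_on (carrier D) (rel_R D)"
    using A B antisymp_on_trans_amalg[OF agree_R transp_R] unfolding D_def amalgam_def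
    by (cases t) (simp_all add: rmodel_def partial_order_on_def)
  have antisymp_S_D: "t = T1 \<Longrightarrow> antisymp_on (carrier D) (rel_S D)"
    using A B antisymp_on_trans_amalg[OF agree_S transp_S] unfolding D_def amalgam_def
    by (simp add: rmodel_def partial_order_on_def)
  show ?thesis
    using A B R_le_S_D transp_R_D transp_S_D symp_S_D antisymp_R_D antisymp_S_D
    unfolding D_def[symmetric]
    by (cases t) (simp_all add: rmodel_def diag partial_order_on_def preorder_on_def tolerance_on_def
        strict_partial_order_on_def graph_rel_on_def digraph_rel_on_def)
qed

lemma super_cond_amalgam:
  fixes A B C :: "('a, 'b) rstr_scheme"
  assumes A: "rmodel t A" and B: "rmodel t B" and C: "carrier C = carrier A \<inter> carrier B"
  shows "super_cond rel_R A B C (amalgam t A B m)" and "super_cond rel_S A B C (amalgam t A B m)"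
proof -
  show "super_cond rel_R A B C (amalgam t A B m)"
    unfolding super_cond_def amalgam_def C by (simp add: free_amalg_outside trans_amalg_cross)
  show "super_cond rel_S A B C (amalgam t A B m)"
  proof (cases "t = T3 \<or> t = T4")
    case True
    note sym_cross = sym_amalg_cross[OF rmodel_symp_S[OF A True] rmodel_symp_S[OF B True]
        rmodel_R_le_S[OF A] rmodel_R_le_S[OF B]]
    show ?thesis
      using True sym_cross unfolding super_cond_def amalgam_def C by simp blast
  next
    case False
    then show ?thesis
      unfolding super_cond_def amalgam_def C by (simp add: trans_amalg_cross)
  qed
qed

lemma monotone_on_amalgam:
  assumes E: "rmodel t E"
    and h: "h ` carrier A \<subseteq> carrier E" "h ` carrier B \<subseteq> carrier E"
    and mono_A: "monotone_on (carrier A) (rel_R A) (rel_R E) h" "monotone_on (carrier A) (rel_S A) (rel_S E) h"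
    and mono_B: "monotone_on (carrier B) (rel_R B) (rel_R E) h" "monotone_on (carrier B) (rel_S B) (rel_S E) h"
  shows "monotone_on (carrier A \<union> carrier B) (rel_R (amalgam t A B m)) (rel_R E) h"
    and "monotone_on (carrier A \<union> carrier B) (rel_S (amalgam t A B m)) (rel_S E) h"
proof -
  have h_Un: "h ` (carrier A \<union> carrier B) \<subseteq> carrier E" using h by blast
  have trans_R: "monotone_on (carrier A \<union> carrier B)
      (trans_amalg (carrier A) (carrier B) (rel_R A) (rel_R B)) (rel_R E) h" if "t \<noteq> T5"
    using monotone_on_trans_amalg[OF rmodel_transp_R[OF E that] h_Un mono_A(1) mono_B(1)] .
  show "monotone_on (carrier A \<union> carrier B) (rel_R (amalgam t A B m)) (rel_R E) h"
    using monotone_on_free_amalg[OF mono_A(1) mono_B(1)] trans_R unfolding amalgam_def by simp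
  show "monotone_on (carrier A \<union> carrier B) (rel_S (amalgam t A B m)) (rel_S E) h"
  proof (cases "t = T3 \<or> t = T4")
    case True
    have "monotone_on (carrier A \<union> carrier B)
        (trans_amalg (carrier A) (carrier B) (rel_R A) (rel_R B)) (rel_S E) h"
      using trans_R True rmodel_R_le_S[OF E] h_Un unfolding monotone_on_def by blast
    from monotone_on_sym_amalg[OF rmodel_symp_S[OF E True] h_Un mono_A(2) mono_B(2) this]
    show ?thesis using True unfolding amalgam_def by simp
  next
    case False
    then show ?thesis
      using monotone_on_trans_amalg[OF rmodel_transp_S[OF E] h_Un mono_A(2) mono_B(2)]
      unfolding amalgam_def by simp
  qed
qed

section \<open>Unary operations\<close>

text \<open>An operation reversing both relations of \<open>M\<close> is a homomorphism from \<open>M\<close> to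
  \<open>orient False M\<close>.\<close>

definition orient :: "bool \<Rightarrow> ('a, 'b) rstr_scheme \<Rightarrow> ('a, 'b) rstr_scheme" where
  "orient p M = (if p then M else M\<lparr>rel_R := (rel_R M)\<inverse>\<inverse>, rel_S := (rel_S M)\<inverse>\<inverse>\<rparr>)"

lemma carrier_orient [simp]: "carrier (orient p M) = carrier M"
  by (simp add: orient_def)

lemma rmodel_orient: "rmodel t M \<Longrightarrow> rmodel t (orient p M)"
  by (cases t) (auto simp: orient_def rmodel_def partial_order_on_def preorder_on_def tolerance_on_def
      strict_partial_order_on_def graph_rel_on_def digraph_rel_on_def)

lemma rsubstr_orient: "rsubstr A D \<Longrightarrow> rsubstr (orient p A) (orient p D)"
  by (simp add: orient_def rsubstr_def)

lemma omodel_iff_orient: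
  "omodel t pol M \<longleftrightarrow> rmodel t M \<and> (\<forall>i. ops M i ` carrier M \<subseteq> carrier M) \<and>
     (\<forall>i. monotone_on (carrier M) (rel_R M) (rel_R (orient (pol i) M)) (ops M i) \<and>
          monotone_on (carrier M) (rel_S M) (rel_S (orient (pol i) M)) (ops M i))"
  unfolding omodel_def orient_def monotone_on_def image_subset_iff by auto

lemma monotone_on_rsubstr:
  assumes "rsubstr A D" "h ` X \<subseteq> carrier A"
  shows "monotone_on X r (rel_R A) h \<Longrightarrow> monotone_on X r (rel_R D) h"
    and "monotone_on X r (rel_S A) h \<Longrightarrow> monotone_on X r (rel_S D) h"
  using assms unfolding rsubstr_def monotone_on_def by blast+

lemma ops_agree_osubstr:
  assumes "osubstr C A" "osubstr C B" "carrier C = carrier A \<inter> carrier B"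
  shows "\<forall>i. \<forall>x\<in>carrier A \<inter> carrier B. ops A i x = ops B i x"
  using assms unfolding osubstr_def by metis

definition glue_ops :: "('a, 'i) ostr \<Rightarrow> ('a, 'i) ostr \<Rightarrow> 'i \<Rightarrow> 'a \<Rightarrow> 'a" where
  "glue_ops A B i x = (if x \<in> carrier A then ops A i x else ops B i x)"

lemma ops_amalgam [simp]: "ops (amalgam t A B (ostr.fields f)) = f"
  by (simp add: amalgam_def ostr.defs)

lemma omodel_ops_into_rsubstr:
  assumes A: "omodel t pol A" and sub: "rsubstr A D" and g: "\<forall>x\<in>carrier A. g x = ops A i x"
  shows "g ` carrier A \<subseteq> carrier A"
    and "monotone_on (carrier A) (rel_R A) (rel_R (orient (pol i) D)) g"
    and "monotone_on (carrier A) (rel_S A) (rel_S (orient (pol i) D)) g"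
proof -
  have "monotone_on (carrier A) (rel_R A) (rel_R (orient (pol i) A)) g"
    "monotone_on (carrier A) (rel_S A) (rel_S (orient (pol i) A)) g"
    using A g unfolding omodel_iff_orient monotone_on_def by simp_all
  moreover show g_A: "g ` carrier A \<subseteq> carrier A"
    using A g unfolding omodel_iff_orient by auto
  ultimately show "monotone_on (carrier A) (rel_R A) (rel_R (orient (pol i) D)) g"
    "monotone_on (carrier A) (rel_S A) (rel_S (orient (pol i) D)) g"
    using monotone_on_rsubstr[OF rsubstr_orient[OF sub]] g_A by simp_all
qed

lemma omodel_amalgam:
  assumes A: "omodel t pol A" and B: "omodel t pol B"
    and agree_R: "agree_on (carrier A) (carrier B) (rel_R A) (rel_R B)"
    and agree_S: "agree_on (carrier A) (carrier B) (rel_S A) (rel_S B)"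
    and agree_ops: "\<forall>i. \<forall>x\<in>carrier A \<inter> carrier B. ops A i x = ops B i x"
  shows "omodel t pol (amalgam t A B (ostr.fields (glue_ops A B)))"
proof -
  define D where "D = amalgam t A B (ostr.fields (glue_ops A B))"
  have rA: "rmodel t A" and rB: "rmodel t B" using A B unfolding omodel_def by simp_all
  have D: "rmodel t D" using rmodel_amalgam[OF rA rB agree_R agree_S] unfolding D_def .
  have sub: "rsubstr A D" "rsubstr B D" using rsubstr_amalgam[OF rA rB agree_R agree_S] unfolding D_def .
  have ops_D: "\<forall>x\<in>carrier A. ops D i x = ops A i x" "\<forall>x\<in>carrier B. ops D i x = ops B i x" for i
    using agree_ops unfolding D_def glue_ops_def by auto
  have carrier_D: "carrier D = carrier A \<union> carrier B" unfolding D_def by simp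
  have "ops D i ` carrier D \<subseteq> carrier D \<and>
      monotone_on (carrier D) (rel_R D) (rel_R (orient (pol i) D)) (ops D i) \<and>
      monotone_on (carrier D) (rel_S D) (rel_S (orient (pol i) D)) (ops D i)" for i
  proof -
    note into_A = omodel_ops_into_rsubstr[OF A sub(1) ops_D(1)[of i]]
    note into_B = omodel_ops_into_rsubstr[OF B sub(2) ops_D(2)[of i]]
    have maps: "ops D i ` carrier A \<subseteq> carrier (orient (pol i) D)"
      "ops D i ` carrier B \<subseteq> carrier (orient (pol i) D)"
      using into_A(1) into_B(1) carrier_D by auto
    from monotone_on_amalgam[OF rmodel_orient[OF D] maps into_A(2,3) into_B(2,3),
        where m = "ostr.fields (glue_ops A B)", folded D_def carrier_D]
    show ?thesis using maps carrier_D by (simp add: image_Un)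
  qed
  with D show ?thesis unfolding omodel_iff_orient D_def by blast
qed

lemma osubstr_amalgam:
  assumes A: "omodel t pol A" and B: "omodel t pol B"
    and agree_R: "agree_on (carrier A) (carrier B) (rel_R A) (rel_R B)"
    and agree_S: "agree_on (carrier A) (carrier B) (rel_S A) (rel_S B)"
    and agree_ops: "\<forall>i. \<forall>x\<in>carrier A \<inter> carrier B. ops A i x = ops B i x"
  shows "osubstr A (amalgam t A B (ostr.fields (glue_ops A B)))"
    and "osubstr B (amalgam t A B (ostr.fields (glue_ops A B)))"
  using rsubstr_amalgam[OF _ _ agree_R agree_S] A B agree_ops
  unfolding osubstr_def omodel_def glue_ops_def by auto

theorem corollary3p2:
  fixes t :: thy and pol :: "'i \<Rightarrow> bool"
  shows
   "(\<forall>A B C :: 'a rstr.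
       rmodel t A \<and> rmodel t B \<and> rmodel t C \<and> rsubstr C A \<and> rsubstr C B \<and>
       carrier C = carrier A \<inter> carrier B \<longrightarrow>
       (\<exists>D :: 'a rstr. rmodel t D \<and> rsubstr A D \<and> rsubstr B D \<and>
          super_cond rel_R A B C D \<and> super_cond rel_S A B C D))
    \<and>
    (\<forall>A B C :: ('a, 'i) ostr.
       omodel t pol A \<and> omodel t pol B \<and> omodel t pol C \<and> osubstr C A \<and> osubstr C B \<and>
       carrier C = carrier A \<inter> carrier B \<longrightarrow>
       (\<exists>D :: ('a, 'i) ostr. omodel t pol D \<and> osubstr A D \<and> osubstr B D))"
proof (intro conjI allI impI)
  fix A B C :: "'a rstr"
  assume "rmodel t A \<and> rmodel t B \<and> rmodel t C \<and> rsubstr C A \<and> rsubstr C B \<and>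
    carrier C = carrier A \<inter> carrier B"
  then have A: "rmodel t A" and B: "rmodel t B" and C: "carrier C = carrier A \<inter> carrier B"
    and agree: "agree_on (carrier A) (carrier B) (rel_R A) (rel_R B)"
      "agree_on (carrier A) (carrier B) (rel_S A) (rel_S B)"
    using agree_on_rsubstr by blast+
  show "\<exists>D :: 'a rstr. rmodel t D \<and> rsubstr A D \<and> rsubstr B D \<and>
      super_cond rel_R A B C D \<and> super_cond rel_S A B C D"
    using rmodel_amalgam[OF A B agree, where m = "()"] rsubstr_amalgam[OF A B agree, where m = "()"]
      super_cond_amalgam[OF A B C, where m = "()"]
    by blast
next
  fix A B C :: "('a, 'i) ostr"
  assume "omodel t pol A \<and> omodel t pol B \<and> omodel t pol C \<and> osubstr C A \<and> osubstr C B \<and>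
    carrier C = carrier A \<inter> carrier B"
  then have A: "omodel t pol A" and B: "omodel t pol B"
    and agree: "agree_on (carrier A) (carrier B) (rel_R A) (rel_R B)"
      "agree_on (carrier A) (carrier B) (rel_S A) (rel_S B)"
      "\<forall>i. \<forall>x\<in>carrier A \<inter> carrier B. ops A i x = ops B i x"
    using agree_on_rsubstr ops_agree_osubstr unfolding osubstr_def by blast+
  show "\<exists>D :: ('a, 'i) ostr. omodel t pol D \<and> osubstr A D \<and> osubstr B D"
    using omodel_amalgam[OF A B agree] osubstr_amalgam[OF A B agree] by blast
qed

end
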